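(* Algorithm $R_A$ (described in the context) is strategyproof over the domain of all monotonic profiles (for $n$ agents and alternatives $\{A,B\}$) that admit a unique stable assignment.
   Context: Agents $V=\{v_1,\dots,v_n\}$; two alternatives $A,B$. Each agent $v_i$ has a strict total order $\succ_i$ on $\{A,B\}\times\{1,\dots,n\}$, where $(S,j)$ means being in the community adopting $S$ of size $j$; it is monotonic if $(S,j)\succ_i(S,k)$ whenever $k<j$. An assignment is a map $f:V\to\{A,B\}$; $v_i$ prefers $f$ to $g$ if $(f(v_i),|f^{-1}(f(v_i))|)\succ_i(g(v_i),|g^{-1}(g(v_i))|)$. An assignment $f$ is stable if there is no assignment $f'\neq f$ such that every agent $v_i$ with $f'(v_i)\neq f(v_i)$ prefers $f'$ to $f$. Algorithm $R_A$: set $V_A=V$, $V_B=\emptyset$, $a=|V_A|$, $b=|V_B|$. Repeat: let $k$ be the largest $j\in\{1,\dots,a\}$ with $|\{v_i\in V_A:(B,b+j)\succ_i(A,a)\}|\ge j$, or $k=0$ if none exists. If $k=0$, output $f$ with $f^{-1}(A)=V_A$, $f^{-1}(B)=V_B$. Otherwise let $X=\{v_i\in V_A:(B,b+k)\succ_i(A,a)\}$, move $X$ from $V_A$ to $V_B$, update $a,b$, and repeat. A rule $R$ is strategyproof over a domain $D$ of profiles if for every $V\in D$ with $f=R(V)$ there is no agent $v_i$ and monotonic order $\succ_i'$ such that, with $V'$ obtained from $V$ by replacing $\succ_i$ by $\succ_i'$ and $f'=R(V')$, agent $v_i$ prefers $f'$ to $f$ according to her true order $\succ_i$. *)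

theory Defs
  imports Main
begin

datatype alt = A | B

type_synonym outcome = "alt \<times> nat"
(* (x,y) \<in> r  means  x \<succ> y *)
type_synonym pref = "(outcome \<times> outcome) set"
(* agents are 0..<n; P i is the order of agent i *)
type_synonym profile = "nat \<Rightarrow> pref"

definition outcomes :: "nat \<Rightarrow> outcome set" where
  "outcomes n = UNIV \<times> {1..n}"

definition strict_total_order :: "nat \<Rightarrow> pref \<Rightarrow> bool" where
  "strict_total_order n r \<longleftrightarrow> r \<subseteq> outcomes n \<times> outcomes n \<and> strict_linear_order_on (outcomes n) r"

definition monotonic :: "nat \<Rightarrow> pref \<Rightarrow> bool" where
  "monotonic n r \<longleftrightarrow> (\<forall>S j k. 1 \<le> k \<and> k < j \<and> j \<le> n \<longrightarrow> ((S, j), (S, k)) \<in> r)"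

definition monotonic_order :: "nat \<Rightarrow> pref \<Rightarrow> bool" where
  "monotonic_order n r \<longleftrightarrow> strict_total_order n r \<and> monotonic n r"

definition monotonic_profile :: "nat \<Rightarrow> profile \<Rightarrow> bool" where
  "monotonic_profile n P \<longleftrightarrow> (\<forall>i<n. monotonic_order n (P i))"

(* assignments f :: nat \<Rightarrow> alt, only values on agents 0..<n matter *)
definition comm_size :: "nat \<Rightarrow> (nat \<Rightarrow> alt) \<Rightarrow> nat \<Rightarrow> nat" where
  "comm_size n f i = card {j. j < n \<and> f j = f i}"

definition prefers :: "nat \<Rightarrow> pref \<Rightarrow> nat \<Rightarrow> (nat \<Rightarrow> alt) \<Rightarrow> (nat \<Rightarrow> alt) \<Rightarrow> bool" where
  "prefers n r i f g \<longleftrightarrow> ((f i, comm_size n f i), (g i, comm_size n g i)) \<in> r"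

definition same_assignment :: "nat \<Rightarrow> (nat \<Rightarrow> alt) \<Rightarrow> (nat \<Rightarrow> alt) \<Rightarrow> bool" where
  "same_assignment n f g \<longleftrightarrow> (\<forall>i<n. f i = g i)"

definition stable :: "nat \<Rightarrow> profile \<Rightarrow> (nat \<Rightarrow> alt) \<Rightarrow> bool" where
  "stable n P f \<longleftrightarrow> \<not> (\<exists>f'. \<not> same_assignment n f' f \<and>
       (\<forall>i<n. f' i \<noteq> f i \<longrightarrow> prefers n (P i) i f' f))"

definition unique_stable :: "nat \<Rightarrow> profile \<Rightarrow> bool" where
  "unique_stable n P \<longleftrightarrow> (\<exists>f. stable n P f \<and> (\<forall>g. stable n P g \<longrightarrow> same_assignment n g f))"

definition RA_cand :: "profile \<Rightarrow> nat set \<Rightarrow> nat set \<Rightarrow> nat \<Rightarrow> nat set" where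
  "RA_cand P VA VB j = {i \<in> VA. ((B, card VB + j), (A, card VA)) \<in> P i}"

definition RA_K :: "profile \<Rightarrow> nat set \<Rightarrow> nat set \<Rightarrow> nat set" where
  "RA_K P VA VB = {j \<in> {1..card VA}. card (RA_cand P VA VB j) \<ge> j}"

lemma RA_term:
  assumes "RA_K P VA VB \<noteq> {}"
  shows "card (VA - RA_cand P VA VB (Max (RA_K P VA VB))) < card VA"
proof -
  let ?K = "RA_K P VA VB" let ?k = "Max ?K"
  have fin: "finite ?K" unfolding RA_K_def by simp
  have "?k \<in> ?K" using Max_in[OF fin assms] .
  hence k: "1 \<le> ?k" "?k \<le> card VA" "card (RA_cand P VA VB ?k) \<ge> ?k"
    unfolding RA_K_def by auto
  hence "card VA > 0" by linarith
  hence finVA: "finite VA" using card_gt_0_iff by blast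
  have "RA_cand P VA VB ?k \<noteq> {}" using k by (metis card.empty not_one_le_zero order_trans)
  moreover have sub: "RA_cand P VA VB ?k \<subseteq> VA" unfolding RA_cand_def by auto
  ultimately show ?thesis using finVA
  proof -
    let ?X = "RA_cand P VA VB ?k"
    assume a: "?X \<noteq> {}" "?X \<subseteq> VA" "finite VA"
    have "finite ?X" using a finite_subset by blast
    hence "card ?X > 0" using a(1) by (simp add: card_gt_0_iff)
    moreover have "card (VA - ?X) = card VA - card ?X" using a \<open>finite ?X\<close> by (simp add: card_Diff_subset)
    moreover have "card ?X \<le> card VA" using a card_mono by blast
    ultimately show ?thesis using \<open>card VA > 0\<close> by linarith
  qed
qed

function RA_loop :: "profile \<Rightarrow> nat set \<Rightarrow> nat set \<Rightarrow> nat set" where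
  "RA_loop P VA VB =
     (if RA_K P VA VB = {} then VA
      else (let X = RA_cand P VA VB (Max (RA_K P VA VB)) in RA_loop P (VA - X) (VB \<union> X)))"
  by pat_completeness auto
termination
  by (relation "measure (\<lambda>(P, VA, VB). card VA)") (auto simp: Let_def intro: RA_term)

definition RA :: "nat \<Rightarrow> profile \<Rightarrow> (nat \<Rightarrow> alt)" where
  "RA n P = (\<lambda>i. if i \<in> RA_loop P {0..<n} {} then A else B)"

definition strategyproof_on :: "nat \<Rightarrow> (nat \<Rightarrow> profile \<Rightarrow> (nat \<Rightarrow> alt)) \<Rightarrow> (profile \<Rightarrow> bool) \<Rightarrow> bool" where
  "strategyproof_on n R D \<longleftrightarrow>
     (\<forall>P. D P \<longrightarrow> \<not> (\<exists>i r'. i < n \<and> monotonic_order n r' \<and>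
          prefers n (P i) i (R n (P(i := r'))) (R n P)))"

end

theory Submission
  imports Defs
begin

(* Call a nonempty set X of adopters of s blocking if all its members prefer switching
   together to the other alternative t, i.e. to a community of size |t| + |X|. An assignment
   unblocked on both sides is stable: in a deviation, the side losing at least as many agents
   as it gains forms a blocking set. Moving a blocking set from s to t creates no blocking set
   on side t; so R_A, which moves such sets from A to B until none is left, outputs a stable
   assignment, and every assignment unblocked on side t extends to a stable one in which side t
   has only grown.
   Suppose agent i gains by misreporting and is assigned s in the resulting assignment g. Side t
   of g contains only truthful agents, so it is unblocked for the true profile. If side s is
   unblocked as well, g is stable, hence it is the truthful outcome. Otherwise i belongs to some
   blocking set X on side s; moving X and extending yields the unique stable assignment, which
   gives i a community on side t at least as large as the one X was aiming for, and i prefers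
   that to her outcome in g. *)

fun other :: "alt \<Rightarrow> alt" where
  "other A = B"
| "other B = A"

lemma other_other [simp]: "other (other s) = s"
  by (cases s) auto

lemma other_neq [simp]: "other s \<noteq> s" "s \<noteq> other s"
  by (cases s; simp)+

lemma neq_imp_eq_other: "x \<noteq> s \<Longrightarrow> x = other s"
  by (cases x; cases s) auto

lemma all_alt_iff: "(\<forall>s. Q s) \<longleftrightarrow> Q t \<and> Q (other t)"
  by (metis neq_imp_eq_other)

context
  fixes n :: nat and r :: pref
  assumes mo: "monotonic_order n r"
begin

lemma monotonic_order_trans: "(x, y) \<in> r \<Longrightarrow> (y, z) \<in> r \<Longrightarrow> (x, z) \<in> r"
  using mo unfolding monotonic_order_def strict_total_order_def strict_linear_order_on_def
  by (meson trans_def)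

lemma monotonic_order_irrefl: "(x, x) \<notin> r"
  using mo unfolding monotonic_order_def strict_total_order_def strict_linear_order_on_def
  by (meson irrefl_def)

lemma monotonic_order_asym: "(x, y) \<in> r \<Longrightarrow> (y, x) \<notin> r"
  using monotonic_order_trans monotonic_order_irrefl by blast

lemma monotonic_order_size_range: "((S, j), (T, k)) \<in> r \<Longrightarrow> 1 \<le> j \<and> j \<le> n \<and> 1 \<le> k \<and> k \<le> n"
  using mo unfolding monotonic_order_def strict_total_order_def outcomes_def by auto

lemma monotonic_order_enlarge_left:
  assumes "((S, k), y) \<in> r" "k \<le> j" "j \<le> n"
  shows "((S, j), y) \<in> r"
proof (cases "k = j")
  case False
  have "1 \<le> k" using monotonic_order_size_range assms(1) by (cases y) blast
  with assms False mo have "((S, j), (S, k)) \<in> r"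
    unfolding monotonic_order_def monotonic_def by simp
  with assms(1) show ?thesis using monotonic_order_trans by blast
qed (use assms in simp)

lemma monotonic_order_shrink_right:
  assumes "(x, (S, j)) \<in> r" "1 \<le> k" "k \<le> j"
  shows "(x, (S, k)) \<in> r"
proof (cases "k = j")
  case False
  have "j \<le> n" using monotonic_order_size_range assms(1) by (cases x) blast
  with assms False mo have "((S, j), (S, k)) \<in> r"
    unfolding monotonic_order_def monotonic_def by simp
  with assms(1) show ?thesis using monotonic_order_trans by blast
qed (use assms in simp)

lemma monotonic_order_same_alt: "((S, k), (S, j)) \<in> r \<Longrightarrow> j < k"
  by (meson monotonic_order_enlarge_left monotonic_order_irrefl monotonic_order_size_range not_less)

end

lemma monotonic_profileD: "monotonic_profile n P \<Longrightarrow> i < n \<Longrightarrow> monotonic_order n (P i)"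
  unfolding monotonic_profile_def by blast

definition adopters :: "nat \<Rightarrow> (nat \<Rightarrow> alt) \<Rightarrow> alt \<Rightarrow> nat set" where
  "adopters n h s = {j. j < n \<and> h j = s}"

lemma finite_adopters [simp]: "finite (adopters n h s)"
  unfolding adopters_def by simp

lemma card_adopters_other: "card (adopters n h s) + card (adopters n h (other s)) = n"
proof -
  have "adopters n h s \<union> adopters n h (other s) = {..<n}"
    unfolding adopters_def using neq_imp_eq_other by auto
  moreover have "adopters n h s \<inter> adopters n h (other s) = {}"
    unfolding adopters_def by auto
  ultimately show ?thesis
    by (metis card_Un_disjoint card_lessThan finite_adopters)
qed

lemma card_adopters_pos: "j \<in> adopters n h s \<Longrightarrow> 1 \<le> card (adopters n h s)"
  by (auto simp: Suc_le_eq card_gt_0_iff)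

lemma comm_size_adopters: "comm_size n f i = card (adopters n f (f i))"
  unfolding comm_size_def adopters_def ..

lemma adopters_cong: "same_assignment n f g \<Longrightarrow> adopters n f s = adopters n g s"
  unfolding same_assignment_def adopters_def by auto

definition switch_to :: "alt \<Rightarrow> nat set \<Rightarrow> (nat \<Rightarrow> alt) \<Rightarrow> nat \<Rightarrow> alt" where
  "switch_to t X h j = (if j \<in> X then t else h j)"

context
  fixes n :: nat and h :: "nat \<Rightarrow> alt" and t :: alt and X :: "nat set"
  assumes Xs: "X \<subseteq> adopters n h (other t)"
begin

lemma adopters_switch: "adopters n (switch_to t X h) t = adopters n h t \<union> X"
  using Xs unfolding adopters_def switch_to_def by auto

lemma adopters_other_switch: "adopters n (switch_to t X h) (other t) = adopters n h (other t) - X"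
  using Xs unfolding adopters_def switch_to_def by auto

lemma finite_switched: "finite X"
  using finite_subset[OF Xs finite_adopters] .

lemma card_adopters_switch: "card (adopters n (switch_to t X h) t) = card (adopters n h t) + card X"
proof -
  have "adopters n h t \<inter> X = {}" using Xs unfolding adopters_def by auto
  then show ?thesis unfolding adopters_switch by (simp add: card_Un_disjoint finite_switched)
qed

lemma card_adopters_other_switch:
  "card (adopters n (switch_to t X h) (other t)) = card (adopters n h (other t)) - card X"
  unfolding adopters_other_switch using Xs by (simp add: card_Diff_subset finite_switched)

end

definition blocking :: "nat \<Rightarrow> profile \<Rightarrow> (nat \<Rightarrow> alt) \<Rightarrow> alt \<Rightarrow> nat set \<Rightarrow> bool" where
  "blocking n P h s X \<longleftrightarrow> X \<noteq> {} \<and> X \<subseteq> adopters n h s \<and>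
     (\<forall>j\<in>X. ((other s, card (adopters n h (other s)) + card X), (s, card (adopters n h s))) \<in> P j)"

definition unblocked :: "nat \<Rightarrow> profile \<Rightarrow> (nat \<Rightarrow> alt) \<Rightarrow> alt \<Rightarrow> bool" where
  "unblocked n P h s \<longleftrightarrow> (\<nexists>X. blocking n P h s X)"

lemma blocking_contains_updated:
  assumes "unblocked n (P(i := r)) h s" and "blocking n P h s X"
  shows "i \<in> X"
proof (rule ccontr)
  assume "i \<notin> X"
  with assms(2) have "blocking n (P(i := r)) h s X"
    unfolding blocking_def by (metis fun_upd_other)
  with assms(1) show False unfolding unblocked_def by blast
qed

definition movers :: "nat \<Rightarrow> (nat \<Rightarrow> alt) \<Rightarrow> (nat \<Rightarrow> alt) \<Rightarrow> alt \<Rightarrow> nat set" where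
  "movers n h f s = {j \<in> adopters n h s. f j \<noteq> s}"

lemma movers_subset_adopters: "movers n h f s \<subseteq> adopters n h s"
  unfolding movers_def by auto

lemma card_adopters_after_moves:
  "card (adopters n f (other s)) + card (movers n h f (other s))
     = card (adopters n h (other s)) + card (movers n h f s)"
proof -
  let ?T = "adopters n h (other s)" and ?M = "movers n h f (other s)"
  have "adopters n f (other s) = (?T - ?M) \<union> movers n h f s"
    unfolding movers_def adopters_def using neq_imp_eq_other by auto
  moreover have "(?T - ?M) \<inter> movers n h f s = {}"
    unfolding movers_def adopters_def by auto
  moreover have "finite (movers n h f s)"
    using finite_subset[OF movers_subset_adopters finite_adopters] .
  ultimately have "card (adopters n f (other s)) = card (?T - ?M) + card (movers n h f s)"
    by (simp add: card_Un_disjoint)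
  moreover have "card (?T - ?M) + card ?M = card ?T"
    using movers_subset_adopters[of n h f "other s"]
    by (metis card_Diff_subset card_mono finite_adopters le_add_diff_inverse2 finite_subset)
  ultimately show ?thesis by linarith
qed

lemma movers_blocking:
  assumes mp: "monotonic_profile n P"
    and gain: "\<forall>j<n. f j \<noteq> h j \<longrightarrow> prefers n (P j) j f h"
    and ne: "movers n h f s \<noteq> {}"
    and le: "card (movers n h f (other s)) \<le> card (movers n h f s)"
  shows "blocking n P h s (movers n h f s)"
  unfolding blocking_def
proof (intro conjI ballI)
  show "movers n h f s \<subseteq> adopters n h s" by (rule movers_subset_adopters)
  then have "card (movers n h f s) \<le> card (adopters n h s)" by (simp add: card_mono)
  then have bound: "card (adopters n h (other s)) + card (movers n h f s) \<le> n"
    using card_adopters_other[of n h s] by linarith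
  fix j assume j: "j \<in> movers n h f s"
  then have "j < n" "h j = s" "f j = other s"
    unfolding movers_def adopters_def using neq_imp_eq_other by auto
  with gain have "((other s, card (adopters n f (other s))), (s, card (adopters n h s))) \<in> P j"
    unfolding prefers_def comm_size_adopters by auto
  moreover have
    "card (adopters n f (other s)) \<le> card (adopters n h (other s)) + card (movers n h f s)"
    using card_adopters_after_moves[of n f s h] by linarith
  ultimately show "((other s, card (adopters n h (other s)) + card (movers n h f s)),
                     (s, card (adopters n h s))) \<in> P j"
    using monotonic_order_enlarge_left[OF monotonic_profileD[OF mp \<open>j < n\<close>]] bound by blast
qed (use ne in simp)

lemma stable_if_unblocked:
  assumes mp: "monotonic_profile n P" and u: "\<forall>s. unblocked n P h s"
  shows "stable n P h"
  unfolding stable_def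
proof
  assume "\<exists>f. \<not> same_assignment n f h \<and> (\<forall>i<n. f i \<noteq> h i \<longrightarrow> prefers n (P i) i f h)"
  then obtain f where "\<not> same_assignment n f h" and gain: "\<forall>j<n. f j \<noteq> h j \<longrightarrow> prefers n (P j) j f h"
    by blast
  then obtain j0 where "j0 < n" "f j0 \<noteq> h j0" unfolding same_assignment_def by auto
  then have ne: "movers n h f (h j0) \<noteq> {}" unfolding movers_def adopters_def by auto
  obtain s where "movers n h f s \<noteq> {}" "card (movers n h f (other s)) \<le> card (movers n h f s)"
  proof (cases "card (movers n h f (other (h j0))) \<le> card (movers n h f (h j0))")
    case True
    with ne that show ?thesis by blast
  next
    case False
    then have "movers n h f (other (h j0)) \<noteq> {}" by auto
    with False that[of "other (h j0)"] show ?thesis by simp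
  qed
  then have "blocking n P h s (movers n h f s)" by (rule movers_blocking[OF mp gain])
  with u show False unfolding unblocked_def by blast
qed

lemma blocking_switchD:
  assumes Xs: "X \<subseteq> adopters n h (other t)" and Y: "blocking n P (switch_to t X h) t Y"
  shows "Y \<noteq> {}" and "Y \<subseteq> adopters n h t \<union> X"
    and "\<forall>j\<in>Y. ((other t, card (adopters n h (other t)) - card X + card Y),
                  (t, card (adopters n h t) + card X)) \<in> P j"
  using Y unfolding blocking_def card_adopters_switch[OF Xs] card_adopters_other_switch[OF Xs]
  by (auto simp: adopters_switch[OF Xs])

context
  fixes n :: nat and P :: profile and h :: "nat \<Rightarrow> alt" and t :: alt and X Y :: "nat set"
  assumes mp: "monotonic_profile n P"
    and X: "blocking n P h (other t) X"
    and Y: "blocking n P (switch_to t X h) t Y"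
begin

lemma blocking_switch_not_subset: "\<not> Y \<subseteq> X"
proof
  assume "Y \<subseteq> X"
  have Xs: "X \<subseteq> adopters n h (other t)" using X unfolding blocking_def by simp
  obtain j where "j \<in> Y" using blocking_switchD(1)[OF Xs Y] by auto
  with \<open>Y \<subseteq> X\<close> Xs have "j \<in> X" "j < n" unfolding adopters_def by auto
  note mo = monotonic_profileD[OF mp \<open>j < n\<close>]
  let ?cs = "card (adopters n h (other t))" and ?ct = "card (adopters n h t)"
  have "((other t, ?cs - card X + card Y), (t, ?ct + card X)) \<in> P j"
    using blocking_switchD(3)[OF Xs Y] \<open>j \<in> Y\<close> by blast
  moreover have "((t, ?ct + card X), (other t, ?cs)) \<in> P j"
    using X \<open>j \<in> X\<close> unfolding blocking_def by simp
  ultimately have "((other t, ?cs - card X + card Y), (other t, ?cs)) \<in> P j"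
    by (rule monotonic_order_trans[OF mo])
  then have "?cs < ?cs - card X + card Y" by (rule monotonic_order_same_alt[OF mo])
  moreover have "card Y \<le> card X" using \<open>Y \<subseteq> X\<close> finite_switched[OF Xs] by (simp add: card_mono)
  moreover have "card X \<le> ?cs" using Xs by (simp add: card_mono)
  ultimately show False by linarith
qed

\<comment> \<open>Members of Y outside X were on side t before X joined it, in a smaller community.\<close>
lemma blocking_switch_remainder: "blocking n P h t (Y - X)"
  unfolding blocking_def
proof (intro conjI ballI)
  have Xs: "X \<subseteq> adopters n h (other t)" using X unfolding blocking_def by simp
  show "Y - X \<noteq> {}" using blocking_switch_not_subset by blast
  show Y0t: "Y - X \<subseteq> adopters n h t" using blocking_switchD(2)[OF Xs Y] by blast
  let ?cs = "card (adopters n h (other t))" and ?ct = "card (adopters n h t)"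
  fix j assume j: "j \<in> Y - X"
  with Y0t have "j < n" and jt: "j \<in> adopters n h t" unfolding adopters_def by auto
  note mo = monotonic_profileD[OF mp \<open>j < n\<close>]
  have "card X \<le> ?cs" using Xs by (simp add: card_mono)
  have "card (Y - X) \<le> ?ct" using Y0t by (simp add: card_mono)
  have "card Y \<le> card (Y - X) + card X"
    using diff_card_le_card_Diff[OF finite_switched[OF Xs], of Y] by linarith
  have "((other t, ?cs - card X + card Y), (t, ?ct + card X)) \<in> P j"
    using blocking_switchD(3)[OF Xs Y] j by blast
  then have "((other t, ?cs + card (Y - X)), (t, ?ct + card X)) \<in> P j"
    by (rule monotonic_order_enlarge_left[OF mo])
      (use \<open>card X \<le> ?cs\<close> \<open>card (Y - X) \<le> ?ct\<close> \<open>card Y \<le> card (Y - X) + card X\<close>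
        card_adopters_other[of n h t] in linarith)+
  then show "((other t, ?cs + card (Y - X)), (t, ?ct)) \<in> P j"
    by (rule monotonic_order_shrink_right[OF mo]) (use card_adopters_pos[OF jt] in simp_all)
qed

end

lemma unblocked_switch:
  assumes "monotonic_profile n P" "unblocked n P h t" "blocking n P h (other t) X"
  shows "unblocked n P (switch_to t X h) t"
  using blocking_switch_remainder[OF assms(1,3)] assms(2) unfolding unblocked_def by blast

lemma unblocked_extension:
  assumes mp: "monotonic_profile n P"
  shows "unblocked n P h t \<Longrightarrow>
    \<exists>h'. adopters n h t \<subseteq> adopters n h' t \<and> (\<forall>s. unblocked n P h' s)"
proof (induction "card (adopters n h (other t))" arbitrary: h rule: less_induct)
  case less
  show ?case
  proof (cases "unblocked n P h (other t)")
    case True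
    with less.prems have "\<forall>s. unblocked n P h s" unfolding all_alt_iff[of _ t] by blast
    then show ?thesis by blast
  next
    case False
    then obtain X where X: "blocking n P h (other t) X" unfolding unblocked_def by blast
    then have Xs: "X \<subseteq> adopters n h (other t)" and "X \<noteq> {}" unfolding blocking_def by auto
    have "adopters n (switch_to t X h) (other t) \<subset> adopters n h (other t)"
      unfolding adopters_other_switch[OF Xs] using Xs \<open>X \<noteq> {}\<close> by blast
    then have "card (adopters n (switch_to t X h) (other t)) < card (adopters n h (other t))"
      by (simp add: psubset_card_mono)
    then obtain h' where "adopters n (switch_to t X h) t \<subseteq> adopters n h' t" "\<forall>s. unblocked n P h' s"
      using less.hyps unblocked_switch[OF mp less.prems X] by blast
    moreover have "adopters n h t \<subseteq> adopters n (switch_to t X h) t"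
      unfolding adopters_switch[OF Xs] by blast
    ultimately show ?thesis by blast
  qed
qed

lemma
  assumes "VA \<subseteq> {0..<n}"
  shows adopters_indicator_A: "adopters n (\<lambda>j. if j \<in> VA then A else B) A = VA"
    and adopters_indicator_B: "adopters n (\<lambda>j. if j \<in> VA then A else B) B = {0..<n} - VA"
  using assms unfolding adopters_def by auto

lemma RA_K_empty_unblocked:
  assumes K: "RA_K P VA VB = {}" and VA: "VA \<subseteq> {0..<n}" and VB: "VB = {0..<n} - VA"
  shows "unblocked n P (\<lambda>j. if j \<in> VA then A else B) A"
  unfolding unblocked_def
proof
  assume "\<exists>X. blocking n P (\<lambda>j. if j \<in> VA then A else B) A X"
  then obtain X where "X \<noteq> {}" "X \<subseteq> VA"
    and gain: "\<forall>j\<in>X. ((B, card VB + card X), (A, card VA)) \<in> P j"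
    unfolding blocking_def adopters_indicator_A[OF VA] other.simps adopters_indicator_B[OF VA] VB
    by auto
  have "finite VA" using finite_subset[OF VA] by simp
  then have "finite X" "card X \<le> card VA"
    using \<open>X \<subseteq> VA\<close> by (simp_all add: finite_subset card_mono)
  moreover have "X \<subseteq> RA_cand P VA VB (card X)"
    unfolding RA_cand_def using \<open>X \<subseteq> VA\<close> gain by auto
  moreover have "finite (RA_cand P VA VB (card X))"
    unfolding RA_cand_def using \<open>finite VA\<close> by simp
  ultimately have "card X \<in> RA_K P VA VB"
    unfolding RA_K_def using \<open>X \<noteq> {}\<close> by (auto simp: Suc_le_eq card_mono)
  with K show False by simp
qed

lemma RA_cand_blocking:
  assumes mp: "monotonic_profile n P" and VA: "VA \<subseteq> {0..<n}" and VB: "VB = {0..<n} - VA"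
    and k: "k \<in> RA_K P VA VB"
  shows "blocking n P (\<lambda>j. if j \<in> VA then A else B) A (RA_cand P VA VB k)"
proof -
  let ?X = "RA_cand P VA VB k"
  have "finite VA" using finite_subset[OF VA] by simp
  have XVA: "?X \<subseteq> VA" unfolding RA_cand_def by auto
  have "1 \<le> k" "k \<le> card ?X" using k unfolding RA_K_def by auto
  have "card ?X \<le> card VA" using XVA \<open>finite VA\<close> by (simp add: card_mono)
  moreover have "card VB + card VA = n"
    unfolding VB using VA \<open>finite VA\<close> card_mono[OF _ VA] by (simp add: card_Diff_subset)
  ultimately have "\<forall>j\<in>?X. ((B, card VB + card ?X), (A, card VA)) \<in> P j"
    using \<open>k \<le> card ?X\<close> XVA VA
      monotonic_order_enlarge_left[OF monotonic_profileD[OF mp], of _ B "card VB + k"]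
    unfolding RA_cand_def by fastforce
  moreover have "?X \<noteq> {}" using \<open>1 \<le> k\<close> \<open>k \<le> card ?X\<close> by auto
  ultimately show ?thesis
    unfolding blocking_def adopters_indicator_A[OF VA] other.simps
      adopters_indicator_B[OF VA, folded VB]
    using XVA by simp
qed

lemma RA_loop_unblocked:
  "monotonic_profile n P \<Longrightarrow> VA \<subseteq> {0..<n} \<Longrightarrow> VB = {0..<n} - VA \<Longrightarrow>
   unblocked n P (\<lambda>j. if j \<in> VA then A else B) B \<Longrightarrow>
   \<forall>s. unblocked n P (\<lambda>j. if j \<in> RA_loop P VA VB then A else B) s"
proof (induction P VA VB rule: RA_loop.induct)
  case (1 P VA VB)
  note mp = "1.prems"(1) and VA = "1.prems"(2) and VB = "1.prems"(3) and u = "1.prems"(4)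
  show ?case
  proof (cases "RA_K P VA VB = {}")
    case True
    then have "unblocked n P (\<lambda>j. if j \<in> VA then A else B) A"
      using RA_K_empty_unblocked VA VB by blast
    with u True show ?thesis unfolding all_alt_iff[of _ A] by simp
  next
    case False
    define X where "X = RA_cand P VA VB (Max (RA_K P VA VB))"
    have "Max (RA_K P VA VB) \<in> RA_K P VA VB"
      using False by (intro Max_in) (simp_all add: RA_K_def)
    then have X: "blocking n P (\<lambda>j. if j \<in> VA then A else B) (other B) X"
      unfolding X_def using RA_cand_blocking[OF mp VA VB] by simp
    then have "X \<subseteq> VA" unfolding blocking_def by (simp add: adopters_indicator_A[OF VA])
    then have "(\<lambda>j. if j \<in> VA - X then A else B) = switch_to B X (\<lambda>j. if j \<in> VA then A else B)"
      unfolding switch_to_def by auto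
    then have "unblocked n P (\<lambda>j. if j \<in> VA - X then A else B) B"
      using unblocked_switch[OF mp u X] by simp
    moreover have "VB \<union> X = {0..<n} - (VA - X)" using VB VA \<open>X \<subseteq> VA\<close> by auto
    ultimately have "\<forall>s. unblocked n P (\<lambda>j. if j \<in> RA_loop P (VA - X) (VB \<union> X) then A else B) s"
      using "1.IH"[OF False X_def mp] VA by blast
    moreover have "RA_loop P VA VB = RA_loop P (VA - X) (VB \<union> X)"
      using False unfolding X_def by (simp add: Let_def)
    ultimately show ?thesis by simp
  qed
qed

lemma RA_unblocked:
  assumes "monotonic_profile n P"
  shows "\<forall>s. unblocked n P (RA n P) s"
proof -
  have "unblocked n P (\<lambda>j. if j \<in> {0..<n} then A else B) B"
    unfolding unblocked_def blocking_def adopters_indicator_B[OF order_refl] by simp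
  with RA_loop_unblocked[OF assms order_refl, of "{}"] show ?thesis
    unfolding RA_def by simp
qed

lemma RA_stable: "monotonic_profile n P \<Longrightarrow> stable n P (RA n P)"
  using stable_if_unblocked RA_unblocked by blast

lemma unique_stable_same_assignment:
  assumes "unique_stable n P" "stable n P f" "stable n P g"
  shows "same_assignment n f g"
proof -
  obtain h where "\<forall>g. stable n P g \<longrightarrow> same_assignment n g h"
    using assms(1) unfolding unique_stable_def by blast
  with assms(2,3) show ?thesis unfolding same_assignment_def by metis
qed

lemma unique_stable_preferred_by_blocker:
  assumes mp: "monotonic_profile n P" and us: "unique_stable n P" and f: "stable n P f"
    and u: "unblocked n P g (other s)" and X: "blocking n P g s X" and "i \<in> X"
  shows "((f i, comm_size n f i), (s, card (adopters n g s))) \<in> P i"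
proof -
  let ?t = "other s"
  have Xs: "X \<subseteq> adopters n g (other ?t)" using X unfolding blocking_def by simp
  let ?h = "switch_to ?t X g"
  have "unblocked n P ?h ?t" by (rule unblocked_switch[OF mp u]) (use X in simp)
  then obtain h' where sub: "adopters n ?h ?t \<subseteq> adopters n h' ?t" and "\<forall>s. unblocked n P h' s"
    using unblocked_extension[OF mp] by blast
  then have "same_assignment n h' f"
    using unique_stable_same_assignment[OF us _ f] stable_if_unblocked[OF mp] by blast
  then have same: "adopters n f ?t = adopters n h' ?t" by (simp add: adopters_cong)
  have "i \<in> adopters n ?h ?t" using \<open>i \<in> X\<close> unfolding adopters_switch[OF Xs] by simp
  then have "i < n" "f i = ?t" using sub same unfolding adopters_def by auto
  have "card (adopters n g ?t) + card X = card (adopters n ?h ?t)"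
    by (rule card_adopters_switch[OF Xs, symmetric])
  also have "\<dots> \<le> card (adopters n f ?t)" unfolding same by (simp add: card_mono sub)
  finally have le: "card (adopters n g ?t) + card X \<le> card (adopters n f ?t)" .
  have "((?t, card (adopters n g ?t) + card X), (s, card (adopters n g s))) \<in> P i"
    using X \<open>i \<in> X\<close> unfolding blocking_def by blast
  then have "((?t, card (adopters n f ?t)), (s, card (adopters n g s))) \<in> P i"
    by (rule monotonic_order_enlarge_left[OF monotonic_profileD[OF mp \<open>i < n\<close>] _ le])
      (use card_adopters_other[of n f ?t] in simp)
  then show ?thesis unfolding comm_size_adopters \<open>f i = ?t\<close> .
qed

lemma unblocked_update_other_side:
  assumes "unblocked n (P(i := r)) h (other (h i))"
  shows "unblocked n P h (other (h i))"
  unfolding unblocked_def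
proof
  assume "\<exists>X. blocking n P h (other (h i)) X"
  then obtain X where X: "blocking n P h (other (h i)) X" ..
  then have "X \<subseteq> adopters n h (other (h i))" unfolding blocking_def by simp
  moreover have "i \<in> X" by (rule blocking_contains_updated[OF assms X])
  ultimately show False unfolding adopters_def by auto
qed

lemma unique_stable_not_worse:
  assumes mp: "monotonic_profile n P" and us: "unique_stable n P" and f: "stable n P f"
    and "i < n" and u': "unblocked n (P(i := r)) g (g i)" and u: "unblocked n P g (other (g i))"
  shows "\<not> prefers n (P i) i g f"
proof
  note mo = monotonic_profileD[OF mp \<open>i < n\<close>]
  assume "prefers n (P i) i g f"
  then have gain: "((g i, card (adopters n g (g i))), (f i, comm_size n f i)) \<in> P i"
    unfolding prefers_def comm_size_adopters .
  show False
  proof (cases "unblocked n P g (g i)")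
    case True
    with u have "stable n P g" using stable_if_unblocked[OF mp] all_alt_iff[of _ "g i"] by blast
    then have "same_assignment n g f" using unique_stable_same_assignment[OF us _ f] by blast
    then have "f i = g i" "adopters n f (g i) = adopters n g (g i)"
      using \<open>i < n\<close> adopters_cong unfolding same_assignment_def by auto
    with gain show False using monotonic_order_irrefl[OF mo] by (simp add: comm_size_adopters)
  next
    case False
    then obtain X where X: "blocking n P g (g i) X" unfolding unblocked_def by blast
    then have "i \<in> X" by (rule blocking_contains_updated[OF u'])
    with gain show False
      using unique_stable_preferred_by_blocker[OF mp us f u X] monotonic_order_asym[OF mo] by blast
  qed
qed

theorem lemma1:
  fixes n :: nat
  shows "strategyproof_on n RA (\<lambda>P. monotonic_profile n P \<and> unique_stable n P)"
  unfolding strategyproof_on_def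
proof (intro allI impI notI)
  fix P assume "monotonic_profile n P \<and> unique_stable n P"
  then have mp: "monotonic_profile n P" and us: "unique_stable n P" by auto
  assume "\<exists>i r'. i < n \<and> monotonic_order n r' \<and> prefers n (P i) i (RA n (P(i := r'))) (RA n P)"
  then obtain i r' where "i < n" and mp': "monotonic_profile n (P(i := r'))"
    and gain: "prefers n (P i) i (RA n (P(i := r'))) (RA n P)"
    using mp unfolding monotonic_profile_def by auto
  let ?g = "RA n (P(i := r'))"
  have "\<forall>s. unblocked n (P(i := r')) ?g s" by (rule RA_unblocked[OF mp'])
  then have "unblocked n (P(i := r')) ?g (?g i)" "unblocked n P ?g (other (?g i))"
    using unblocked_update_other_side by blast+
  with gain show False
    using unique_stable_not_worse[OF mp us RA_stable[OF mp] \<open>i < n\<close>] by blast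
qed

end
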